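(* Let $G$ be a locally compact group and let $\alpha$ be a (jointly continuous) action of $G$ on a locally compact Hausdorff space $M$; let $\alpha$ also denote the induced action on $A=C_\infty(M)$ given by $(\alpha_x f)(m)=f(\alpha_x^{-1}(m))$. Then the action $\alpha$ on the $C^*$-algebra $C_\infty(M)$ is proper (in the sense defined in the context) if and only if the action $\alpha$ on the space $M$ is proper, i.e. the map $M\times G\to M\times M$, $(m,x)\mapsto (m,\alpha_x(m))$, is proper (preimages of compact sets are compact).
   Context: $G$ carries a fixed left Haar measure $dx$. Let $\mathcal{B}$ be the set of $\lambda\in L^\infty(G)$ with compact support and $0\le\lambda\le 1$, directed by the pointwise order. For a strongly continuous action $\alpha$ of $G$ on a $C^*$-algebra $A$ and $\lambda\in\mathcal B$, $a\in A$, put $p_\lambda(a)=\int_G\lambda(x)\alpha_x(a)\,dx\in A$. An element $a\in A^+$ is called $\alpha$-proper if the net $(p_\lambda(a))_{\lambda\in\mathcal B}$ converges in the strict topology of the multiplier algebra $M(A)$ (a net $m_i\to m$ strictly iff $m_ia\to ma$ and $am_i\to am$ in norm for all $a\in A$). Let $\mathcal P_\alpha$ be the linear span of the $\alpha$-proper elements of $A^+$. The action $\alpha$ on $A$ is called proper if $\mathcal P_\alpha$ is dense in $A$. $C_\infty(M)$ denotes continuous functions vanishing at infinity. *)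

theory Defs
  imports "HOL-Analysis.Analysis"
begin

text \<open>The locally compact group G is a type of class topological_group_add (a general,
not necessarily commutative, topological group, written additively), with the whole
type as carrier.\<close>

definition left_haar_measure :: "'g::{topological_group_add,t2_space} measure \<Rightarrow> bool" where
  "left_haar_measure \<mu> \<longleftrightarrow>
     sets \<mu> = sets borel \<and>
     (\<forall>K. compact K \<longrightarrow> emeasure \<mu> K < \<infinity>) \<and>
     (\<forall>E\<in>sets borel. emeasure \<mu> E = (INF U\<in>{U. open U \<and> E \<subseteq> U}. emeasure \<mu> U)) \<and>
     (\<forall>U. open U \<longrightarrow> emeasure \<mu> U = (SUP K\<in>{K. compact K \<and> K \<subseteq> U}. emeasure \<mu> K)) \<and>
     emeasure \<mu> UNIV \<noteq> 0 \<and>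
     (\<forall>x. \<forall>E\<in>sets borel. emeasure \<mu> ((\<lambda>y. x + y) ` E) = emeasure \<mu> E)"

definition continuous_action :: "('g::topological_group_add \<Rightarrow> 'm::topological_space \<Rightarrow> 'm) \<Rightarrow> bool" where
  "continuous_action \<alpha> \<longleftrightarrow>
     (\<forall>m. \<alpha> 0 m = m) \<and> (\<forall>x y m. \<alpha> (x + y) m = \<alpha> x (\<alpha> y m)) \<and>
     continuous_on UNIV (\<lambda>(x, m). \<alpha> x m)"

definition proper_space_action :: "('g::topological_space \<Rightarrow> 'm::topological_space \<Rightarrow> 'm) \<Rightarrow> bool" where
  "proper_space_action \<alpha> \<longleftrightarrow>
     (\<forall>K::('m \<times> 'm) set. compact K \<longrightarrow> compact {(m, x). (m, \<alpha> x m) \<in> K})"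

definition C0 :: "('m::topological_space \<Rightarrow> complex) set" where
  "C0 = {f. continuous_on UNIV f \<and>
            (\<forall>e>0. \<exists>K. compact K \<and> (\<forall>m. m \<notin> K \<longrightarrow> cmod (f m) < e))}"

definition C0_pos :: "('m::topological_space \<Rightarrow> complex) set" where
  "C0_pos = {f \<in> C0. \<forall>m. f m \<in> \<real> \<and> Re (f m) \<ge> 0}"

definition induced_action :: "('g::group_add \<Rightarrow> 'm \<Rightarrow> 'm) \<Rightarrow> 'g \<Rightarrow> ('m \<Rightarrow> complex) \<Rightarrow> ('m \<Rightarrow> complex)" where
  "induced_action \<alpha> x f = (\<lambda>m. f (\<alpha> (- x) m))"

text \<open>The index set B: representatives of elements of L-infinity(G) with compact support
and values in [0,1].\<close>
definition Bset :: "('g::topological_space \<Rightarrow> real) set" where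
  "Bset = {l. l \<in> borel_measurable borel \<and> (\<forall>x. 0 \<le> l x \<and> l x \<le> 1) \<and>
              (\<exists>K. compact K \<and> (\<forall>x. x \<notin> K \<longrightarrow> l x = 0))}"

definition Ble :: "'g measure \<Rightarrow> ('g \<Rightarrow> real) \<Rightarrow> ('g \<Rightarrow> real) \<Rightarrow> bool" where
  "Ble \<mu> l1 l2 \<longleftrightarrow> (AE x in \<mu>. l1 x \<le> l2 x)"

text \<open>p_lambda(a) = integral of lambda(x) alpha_x(a) dx; the A-valued integral is
evaluated pointwise.\<close>
definition p_lam :: "'g::group_add measure \<Rightarrow> ('g \<Rightarrow> 'm \<Rightarrow> 'm) \<Rightarrow> ('g \<Rightarrow> real) \<Rightarrow>
                      ('m \<Rightarrow> complex) \<Rightarrow> ('m \<Rightarrow> complex)" where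
  "p_lam \<mu> \<alpha> l a = (\<lambda>m. LINT x|\<mu>. complex_of_real (l x) * induced_action \<alpha> x a m)"

text \<open>Multiplier algebra of C0(M) as double centralizers (L,R).\<close>
definition double_centralizer :: "(('m::topological_space \<Rightarrow> complex) \<Rightarrow> ('m \<Rightarrow> complex)) \<Rightarrow>
                                 (('m \<Rightarrow> complex) \<Rightarrow> ('m \<Rightarrow> complex)) \<Rightarrow> bool" where
  "double_centralizer L R \<longleftrightarrow> L ` C0 \<subseteq> C0 \<and> R ` C0 \<subseteq> C0 \<and>
     (\<forall>a\<in>C0. \<forall>b\<in>C0. (\<lambda>m. a m * L b m) = (\<lambda>m. R a m * b m))"

text \<open>Norm convergence of a net indexed by (Bset, Ble mu) in C0(M) (sup norm).\<close>
definition net_tendsto :: "'g::topological_space measure \<Rightarrow> (('g \<Rightarrow> real) \<Rightarrow> ('m \<Rightarrow> complex)) \<Rightarrow>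
                            ('m \<Rightarrow> complex) \<Rightarrow> bool" where
  "net_tendsto \<mu> F c \<longleftrightarrow>
     (\<forall>e>0. \<exists>l0\<in>Bset. \<forall>l\<in>Bset. Ble \<mu> l0 l \<longrightarrow> (\<forall>m. cmod (F l m - c m) \<le> e))"

text \<open>Strict convergence of the net (p_lambda(a)) to the multiplier (L,R).\<close>
definition alpha_proper_elem :: "'g::{topological_group_add} measure \<Rightarrow> ('g \<Rightarrow> 'm::topological_space \<Rightarrow> 'm) \<Rightarrow>
                                  ('m \<Rightarrow> complex) \<Rightarrow> bool" where
  "alpha_proper_elem \<mu> \<alpha> a \<longleftrightarrow> a \<in> C0_pos \<and>
     (\<exists>L R. double_centralizer L R \<and>
        (\<forall>b\<in>C0. net_tendsto \<mu> (\<lambda>l. (\<lambda>m. p_lam \<mu> \<alpha> l a m * b m)) (L b) \<and>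
                 net_tendsto \<mu> (\<lambda>l. (\<lambda>m. b m * p_lam \<mu> \<alpha> l a m)) (R b)))"

definition P_alpha :: "'g::{topological_group_add} measure \<Rightarrow> ('g \<Rightarrow> 'm::topological_space \<Rightarrow> 'm) \<Rightarrow>
                       ('m \<Rightarrow> complex) set" where
  "P_alpha \<mu> \<alpha> = {g. \<exists>n::nat. \<exists>c h. (\<forall>i<n. alpha_proper_elem \<mu> \<alpha> (h i)) \<and>
                       g = (\<lambda>m. \<Sum>i<n. c i * h i m)}"

definition proper_C0_action :: "'g::{topological_group_add} measure \<Rightarrow> ('g \<Rightarrow> 'm::topological_space \<Rightarrow> 'm) \<Rightarrow> bool" where
  "proper_C0_action \<mu> \<alpha> \<longleftrightarrow>
     (\<forall>f\<in>C0. \<forall>e>0. \<exists>g\<in>P_alpha \<mu> \<alpha>. \<forall>m. cmod (f m - g m) < e)"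

end

theory Submission
  imports Defs
begin

text \<open>
  Properness of \<alpha> on M says that for compact K, S the set of x with \<alpha>_{-x}(K) \<inter> S \<noteq> {} is
  compact. Then for a \<ge> 0 supported in a compact set S and m in a compact set K the integrand
  x \<mapsto> a(\<alpha>_{-x} m) vanishes off a fixed compact set, so p_\<lambda>(a) agrees on K with the total
  orbit integral \<phi>(m) = \<integral> a(\<alpha>_{-x} m) dx once \<lambda> = 1 there. By left invariance \<phi> is bounded,
  by local compactness it is continuous, and multiplication by \<phi> is the strict limit of the net.
  Soft thresholding of real and imaginary parts shows that these elements span a dense subspace.

  Conversely, approximate a Urysohn function that is 1 on K2 by an element of P_\<alpha>. It is dominated
  by a continuous H \<ge> 1/2 on K2 whose orbit integrals over compact sets far out in G are uniformly
  small for m \<in> K1, by the strict convergence of the nets. If m \<in> K1 and \<alpha>_x m \<in> K2, then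
  H(\<alpha>_{-y} m) \<ge> 1/4 for y in the translate by -x of a fixed compact set of positive Haar measure,
  so such a translate cannot lie far out, and x ranges over a compact set.
\<close>

section \<open>Translations and Haar measure\<close>

lemma translate_eq_vimage: "(+) a ` U = (\<lambda>y. - a + y) -` (U :: 'g::group_add set)"
proof (intro set_eqI iffI)
  fix y assume "y \<in> (\<lambda>y. - a + y) -` U"
  then have "- a + y \<in> U" by simp
  moreover have "y = a + (- a + y)" by (simp add: add.assoc[symmetric])
  ultimately show "y \<in> (+) a ` U" by blast
qed auto

lemma open_translate:
  "open U \<Longrightarrow> open ((+) a ` (U :: 'g::topological_group_add set))"
  unfolding translate_eq_vimage by (intro open_vimage continuous_intros)

lemma compact_translate:
  "compact K \<Longrightarrow> compact ((+) a ` (K :: 'g::topological_group_add set))"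
  by (intro compact_continuous_image continuous_intros)

lemma
  assumes "left_haar_measure \<mu>"
  shows left_haar_measure_sets: "sets \<mu> = sets borel"
    and left_haar_measure_compact_finite: "compact K \<Longrightarrow> emeasure \<mu> K < \<infinity>"
    and left_haar_measure_inner_regular:
      "open U \<Longrightarrow> emeasure \<mu> U = (SUP K\<in>{K. compact K \<and> K \<subseteq> U}. emeasure \<mu> K)"
    and left_haar_measure_nonzero: "emeasure \<mu> UNIV \<noteq> 0"
    and left_haar_measure_translate: "E \<in> sets borel \<Longrightarrow> emeasure \<mu> ((+) x ` E) = emeasure \<mu> E"
  using assms unfolding left_haar_measure_def by auto

lemma left_haar_measure_space: "left_haar_measure \<mu> \<Longrightarrow> space \<mu> = UNIV"
  using sets_eq_imp_space_eq[OF left_haar_measure_sets] by simp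

lemma left_haar_measure_compact_sets:
  fixes \<mu> :: "'g::{topological_group_add,t2_space} measure"
  shows "left_haar_measure \<mu> \<Longrightarrow> compact K \<Longrightarrow> K \<in> sets \<mu>"
  by (simp add: left_haar_measure_sets compact_imp_closed)

lemma left_haar_measure_measure_translate:
  fixes \<mu> :: "'g::{topological_group_add,t2_space} measure"
  shows "left_haar_measure \<mu> \<Longrightarrow> compact K \<Longrightarrow> measure \<mu> ((+) x ` K) = measure \<mu> K"
  unfolding measure_def by (simp add: left_haar_measure_translate borel_closed compact_imp_closed)

lemma left_haar_measure_open_pos:
  fixes \<mu> :: "'g::{topological_group_add,t2_space} measure"
  assumes haar: "left_haar_measure \<mu>" and "open U" "u \<in> U"
  shows "0 < emeasure \<mu> U"
proof (rule ccontr)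
  assume "\<not> 0 < emeasure \<mu> U"
  then have null: "emeasure \<mu> U = 0" by (simp add: not_less)
  define T where "T k = (+) (k - u) ` U" for k
  have T_open: "open (T k)" for k
    unfolding T_def using \<open>open U\<close> by (rule open_translate)
  have T_null: "emeasure \<mu> (T k) = 0" for k
    unfolding T_def using haar \<open>open U\<close> null by (simp add: left_haar_measure_translate)
  have "emeasure \<mu> K = 0" if "compact K" for K
  proof -
    have "K \<subseteq> \<Union> (T ` K)"
    proof
      fix k assume "k \<in> K"
      have "k \<in> T k" unfolding T_def using \<open>u \<in> U\<close> by (rule image_eqI[rotated]) simp
      then show "k \<in> \<Union> (T ` K)" using \<open>k \<in> K\<close> by blast
    qed
    then obtain F where F: "F \<subseteq> K" "finite F" "K \<subseteq> \<Union> (T ` F)"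
      by (rule compactE_image[OF \<open>compact K\<close> T_open])
    have sets: "T k \<in> sets \<mu>" for k
      using T_open haar by (simp add: left_haar_measure_sets)
    have "emeasure \<mu> K \<le> emeasure \<mu> (\<Union> (T ` F))"
      using F sets by (intro emeasure_mono) auto
    also have "\<dots> \<le> (\<Sum>k\<in>F. emeasure \<mu> (T k))"
      using F sets by (intro emeasure_subadditive_finite) auto
    finally show ?thesis by (simp add: T_null)
  qed
  then have "(SUP K\<in>{K. compact K \<and> K \<subseteq> UNIV}. emeasure \<mu> K) = 0"
    by (intro SUP_eq_const) auto
  then have "emeasure \<mu> UNIV = 0"
    using left_haar_measure_inner_regular[OF haar open_UNIV] by simp
  then show False using left_haar_measure_nonzero[OF haar] by simp
qed

lemma left_haar_measure_compact_subset_pos: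
  fixes \<mu> :: "'g::{topological_group_add,t2_space} measure"
  assumes haar: "left_haar_measure \<mu>" and "open U" "u \<in> U"
  obtains K where "compact K" "K \<subseteq> U" "0 < measure \<mu> K"
proof -
  have "0 < (SUP K\<in>{K. compact K \<and> K \<subseteq> U}. emeasure \<mu> K)"
    using left_haar_measure_open_pos[OF assms] left_haar_measure_inner_regular[OF haar \<open>open U\<close>]
    by simp
  then obtain K where K: "compact K" "K \<subseteq> U" "0 < emeasure \<mu> K"
    by (auto simp: less_SUP_iff)
  moreover have "emeasure \<mu> K = ennreal (measure \<mu> K)"
    using left_haar_measure_compact_finite[OF haar K(1)] by (simp add: emeasure_eq_ennreal_measure)
  ultimately show thesis using that by simp
qed

lemma integrable_bounded_compact_support:
  fixes \<mu> :: "'g::{topological_group_add,t2_space} measure"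
    and f :: "'g \<Rightarrow> 'b::{banach,second_countable_topology}"
  assumes haar: "left_haar_measure \<mu>" and "f \<in> borel_measurable borel" and "compact K"
    and "\<And>x. x \<notin> K \<Longrightarrow> f x = 0" and "\<And>x. norm (f x) \<le> B"
  shows "integrable \<mu> f"
proof (rule Bochner_Integration.integrable_bound)
  show "integrable \<mu> (\<lambda>x. B * indicator K x :: real)"
    using assms by (intro integrable_mult_right integrable_real_indicator
        left_haar_measure_compact_sets left_haar_measure_compact_finite)
  show "f \<in> borel_measurable \<mu>"
    using assms(2) measurable_cong_sets[OF left_haar_measure_sets[OF haar] refl] by blast
  show "AE x in \<mu>. norm (f x) \<le> norm (B * indicator K x)"
    using assms(4,5) order_trans[OF norm_ge_zero assms(5)]
    by (intro AE_I2) (auto simp: indicator_def)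
qed

lemma continuous_on_integral_indicator_compact:
  fixes F :: "'a::topological_space \<Rightarrow> 'b::t2_space \<Rightarrow> real"
  assumes "continuous_on UNIV (\<lambda>p. F (fst p) (snd p))" "compact C" "C \<in> sets \<mu>" "emeasure \<mu> C < \<infinity>"
    and integrable: "\<And>y. integrable \<mu> (\<lambda>x. indicator C x * F x y)"
  shows "continuous_on UNIV (\<lambda>y. LINT x|\<mu>. indicator C x * F x y)"
proof (intro continuous_at_imp_continuous_on ballI,
    unfold continuous_at tendsto_iff, intro allI impI)
  fix y0 :: 'b and e :: real
  assume "e > 0"
  define e' where "e' = e / (measure \<mu> C + 1)"
  have C_pos: "0 < measure \<mu> C + 1" by (simp add: add_nonneg_pos)
  then have "e' > 0" using \<open>e > 0\<close> by (simp add: e'_def)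
  have "continuous_on (UNIV \<times> C) (\<lambda>p. (snd p, fst p))"
    by (intro continuous_intros)
  then have "continuous_on (UNIV \<times> C) (\<lambda>p. F (snd p) (fst p))"
    using continuous_on_compose2[OF assms(1)] by fastforce
  then obtain Y where Y: "y0 \<in> Y" "open Y" "\<And>y x. y \<in> Y \<Longrightarrow> x \<in> C \<Longrightarrow> dist (F x y) (F x y0) \<le> e'"
    by (rule continuous_on_prod_compactE[OF _ \<open>compact C\<close> UNIV_I[of y0] \<open>e' > 0\<close>]) auto
  have "dist (LINT x|\<mu>. indicator C x * F x y) (LINT x|\<mu>. indicator C x * F x y0) < e"
    if "y \<in> Y" for y
  proof -
    have "dist (LINT x|\<mu>. indicator C x * F x y) (LINT x|\<mu>. indicator C x * F x y0)
        = \<bar>LINT x|\<mu>. indicator C x * F x y - indicator C x * F x y0\<bar>"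
      by (simp add: dist_real_def integrable)
    also have "\<dots> \<le> LINT x|\<mu>. \<bar>indicator C x * F x y - indicator C x * F x y0\<bar>"
      by (rule integral_abs_bound)
    also have "\<dots> \<le> LINT x|\<mu>. e' * indicator C x"
      using Y(3)[OF that] assms(3,4)
      by (intro integral_mono integrable_abs Bochner_Integration.integrable_diff integrable
          integrable_mult_right integrable_real_indicator) (auto simp: indicator_def dist_real_def)
    also have "\<dots> = e' * measure \<mu> C" using assms(3) by (simp add: sets.Int_space_eq2)
    also have "\<dots> < e' * (measure \<mu> C + 1)" using \<open>e' > 0\<close> by simp
    also have "\<dots> = e" using C_pos by (simp add: e'_def)
    finally show ?thesis .
  qed
  then show "\<forall>\<^sub>F y in at y0.
      dist (LINT x|\<mu>. indicator C x * F x y) (LINT x|\<mu>. indicator C x * F x y0) < e"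
    unfolding eventually_at_topological using Y(1,2) by blast
qed

section \<open>Functions vanishing at infinity\<close>

lemma C0_bounded:
  assumes "f \<in> C0"
  obtains B where "\<And>m. cmod (f m) \<le> B"
proof -
  obtain K where K: "compact K" "\<And>m. m \<notin> K \<Longrightarrow> cmod (f m) < 1"
    using assms zero_less_one unfolding C0_def mem_Collect_eq by blast
  have "continuous_on UNIV f" using assms unfolding C0_def by blast
  then have "compact (f ` K)"
    by (rule compact_continuous_image[OF continuous_on_subset K(1)]) simp
  then obtain b where "\<forall>y\<in>f ` K. norm y \<le> b"
    using compact_imp_bounded bounded_iff by metis
  then have "cmod (f m) \<le> max 1 b" for m
    using K(2)[of m] by (cases "m \<in> K") force+
  then show thesis by (rule that)
qed

lemma of_real_compact_support_in_C0:
  assumes "continuous_on UNIV u" "compact K" "\<And>m. m \<notin> K \<Longrightarrow> u m = 0"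
  shows "(\<lambda>m. complex_of_real (u m)) \<in> C0"
  unfolding C0_def using assms by (auto intro!: continuous_intros exI[of _ K])

lemma C0_mult_bounded_small:
  assumes "b \<in> C0" "e > 0" "0 \<le> B"
  obtains K where "compact K" "\<And>m z. m \<notin> K \<Longrightarrow> cmod z \<le> B \<Longrightarrow> cmod (z * b m) < e"
proof -
  have "e / (B + 1) > 0" using assms(2,3) by simp
  then obtain K where K: "compact K" "\<And>m. m \<notin> K \<Longrightarrow> cmod (b m) < e / (B + 1)"
    using assms(1) unfolding C0_def by blast
  have "cmod (z * b m) < e" if "m \<notin> K" "cmod z \<le> B" for m z
  proof -
    have "cmod (z * b m) \<le> (B + 1) * cmod (b m)"
      unfolding norm_mult using that(2) by (intro mult_right_mono) simp_all
    also have "\<dots> < e" using K(2)[OF that(1)] assms(3) by (simp add: pos_less_divide_eq mult.commute)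
    finally show ?thesis .
  qed
  with K(1) show thesis by (rule that)
qed

lemma C0_mult_bounded_continuous:
  assumes "b \<in> C0" "continuous_on UNIV \<phi>" "\<And>m. cmod (\<phi> m) \<le> B"
  shows "(\<lambda>m. \<phi> m * b m) \<in> C0"
  unfolding C0_def mem_Collect_eq
proof
  show "continuous_on UNIV (\<lambda>m. \<phi> m * b m)"
    using assms unfolding C0_def by (auto intro!: continuous_intros)
  have "0 \<le> B" using order_trans[OF norm_ge_zero assms(3)] .
  then show "\<forall>e>0. \<exists>K. compact K \<and> (\<forall>m. m \<notin> K \<longrightarrow> cmod (\<phi> m * b m) < e)"
    using C0_mult_bounded_small[OF assms(1)] assms(3) by metis
qed

lemma C0_of_real_Re:
  assumes "f \<in> C0"
  shows "(\<lambda>m. complex_of_real (Re (f m))) \<in> C0"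
  unfolding C0_def mem_Collect_eq
proof
  show "continuous_on UNIV (\<lambda>m. complex_of_real (Re (f m)))"
    using assms unfolding C0_def by (auto intro!: continuous_intros)
  show "\<forall>e>0. \<exists>K. compact K \<and> (\<forall>m. m \<notin> K \<longrightarrow> cmod (complex_of_real (Re (f m))) < e)"
    using assms abs_Re_le_cmod unfolding C0_def mem_Collect_eq norm_of_real
    by (meson order.strict_trans1)
qed

lemma C0_cutoff:
  assumes "(\<lambda>m. complex_of_real (r m)) \<in> C0" "d > 0"
  shows "(\<lambda>m. complex_of_real (max 0 (r m - d))) \<in> C0_pos"
    and "\<exists>S. compact S \<and> (\<forall>m. m \<notin> S \<longrightarrow> max 0 (r m - d) = 0)"
proof -
  obtain S where S: "compact S" "\<And>m. m \<notin> S \<Longrightarrow> \<bar>r m\<bar> < d"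
    using assms unfolding C0_def mem_Collect_eq norm_of_real by blast
  have zero: "max 0 (r m - d) = 0" if "m \<notin> S" for m
    using S(2)[OF that] by (simp add: abs_less_iff max_def)
  with S(1) show "\<exists>S. compact S \<and> (\<forall>m. m \<notin> S \<longrightarrow> max 0 (r m - d) = 0)" by blast
  have "continuous_on UNIV (\<lambda>m. Re (complex_of_real (r m)))"
    using assms(1) unfolding C0_def by (auto intro!: continuous_intros)
  then have "(\<lambda>m. complex_of_real (max 0 (r m - d))) \<in> C0"
    using S(1) zero
    by (intro of_real_compact_support_in_C0[of _ S]) (auto intro!: continuous_intros)
  then show "(\<lambda>m. complex_of_real (max 0 (r m - d))) \<in> C0_pos"
    unfolding C0_pos_def by auto
qed

lemma C0_pos_eq_of_real: "a \<in> C0_pos \<Longrightarrow> a = (\<lambda>m. of_real (Re (a m)))"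
  unfolding C0_pos_def by (auto simp: of_real_Re)

lemma C0_pos_norm_eq_Re: "a \<in> C0_pos \<Longrightarrow> cmod (a m) = Re (a m)"
  unfolding C0_pos_def by (simp add: in_Reals_norm)

lemma Hausdorff_space_euclidean_t2: "Hausdorff_space (euclidean :: 'a::t2_space topology)"
  using hausdorff by (auto simp: Hausdorff_space_def disjnt_def)

lemma C0_urysohn:
  fixes K :: "'m::t2_space set"
  assumes "locally_compact_space (euclidean :: 'm topology)" "compact K"
  obtains b where "b \<in> C0" "\<And>m. m \<in> K \<Longrightarrow> b m = 1"
proof -
  have "completely_regular_space (euclidean :: 'm topology)"
    using locally_compact_Hausdorff_imp_regular_space[OF assms(1) Hausdorff_space_euclidean_t2]
      completely_regular_eq_regular_space[OF assms(1)] by blast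
  obtain U L where UL: "open U" "compact L" "K \<subseteq> U" "U \<subseteq> L"
    using assms
      locally_compact_space_compact_closed_compact[OF disjI1[OF Hausdorff_space_euclidean_t2]]
    by (metis compactin_euclidean_iff open_openin)
  obtain f :: "'m \<Rightarrow> real" where f: "continuous_map euclidean (top_of_set {0..1}) f"
    "f ` (- U) \<subseteq> {0}" "f ` K \<subseteq> {1}"
    using Urysohn_completely_regular_compact_closed[of 0 1 euclidean K "- U"]
      \<open>completely_regular_space euclidean\<close> assms(2) UL(1,3)
    by (auto simp: closed_closedin[symmetric] disjnt_def)
  have "continuous_on UNIV f"
    using f(1) by (simp add: continuous_map_in_subtopology continuous_map_iff_continuous2)
  then have "(\<lambda>m. of_real (f m)) \<in> C0"
    using UL(2,4) f(2) by (intro of_real_compact_support_in_C0[of _ L]) auto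
  moreover have "of_real (f m) = 1" if "m \<in> K" for m using f(3) that by auto
  ultimately show thesis by (rule that)
qed

section \<open>Proper elements and their span\<close>

lemma BsetD:
  assumes "l \<in> Bset"
  shows "l \<in> borel_measurable borel" "0 \<le> l x" "l x \<le> 1" "\<bar>l x\<bar> \<le> 1"
  using assms unfolding Bset_def by auto

lemma indicator_in_Bset: "compact C \<Longrightarrow> indicator (C :: 'g::t2_space set) \<in> Bset"
  unfolding Bset_def
  by (auto intro!: borel_measurable_indicator borel_closed compact_imp_closed simp: indicator_def)

lemma net_tendsto_mult_C0:
  assumes "b \<in> C0" "0 \<le> B"
    and "\<And>l m. l \<in> Bset \<Longrightarrow> cmod (F l m - \<phi> m) \<le> B"
    and "\<And>K. compact K \<Longrightarrow> \<exists>l0\<in>Bset. \<forall>l\<in>Bset. Ble \<mu> l0 l \<longrightarrow> (\<forall>m\<in>K. F l m = \<phi> m)"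
  shows "net_tendsto \<mu> (\<lambda>l m. F l m * b m) (\<lambda>m. \<phi> m * b m)"
  unfolding net_tendsto_def
proof (intro allI impI)
  fix e :: real assume "e > 0"
  obtain K where K: "compact K" "\<And>m z. m \<notin> K \<Longrightarrow> cmod z \<le> B \<Longrightarrow> cmod (z * b m) < e"
    using C0_mult_bounded_small[OF assms(1) \<open>e > 0\<close> assms(2)] by blast
  obtain l0 where l0: "l0 \<in> Bset" "\<And>l m. l \<in> Bset \<Longrightarrow> Ble \<mu> l0 l \<Longrightarrow> m \<in> K \<Longrightarrow> F l m = \<phi> m"
    using assms(4)[OF K(1)] by blast
  have "cmod (F l m * b m - \<phi> m * b m) \<le> e" if "l \<in> Bset" "Ble \<mu> l0 l" for l m
  proof (cases "m \<in> K")
    case True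
    then show ?thesis using l0(2)[OF that] \<open>e > 0\<close> by simp
  next
    case False
    have "cmod ((F l m - \<phi> m) * b m) < e"
      using K(2)[OF False assms(3)[OF that(1)]] .
    then show ?thesis by (simp add: left_diff_distrib)
  qed
  with l0(1) show "\<exists>l0\<in>Bset. \<forall>l\<in>Bset. Ble \<mu> l0 l \<longrightarrow> (\<forall>m. cmod (F l m * b m - \<phi> m * b m) \<le> e)"
    by blast
qed

lemma alpha_proper_elemI:
  assumes "a \<in> C0_pos" "continuous_on UNIV \<phi>" "\<And>m. cmod (\<phi> m) \<le> B"
    and "\<And>l m. l \<in> Bset \<Longrightarrow> cmod (p_lam \<mu> \<alpha> l a m - \<phi> m) \<le> B"
    and "\<And>K. compact K \<Longrightarrow> \<exists>l0\<in>Bset. \<forall>l\<in>Bset. Ble \<mu> l0 l \<longrightarrow> (\<forall>m\<in>K. p_lam \<mu> \<alpha> l a m = \<phi> m)"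
  shows "alpha_proper_elem \<mu> \<alpha> a"
proof -
  define L where "L b m = \<phi> m * b m" for b :: "'a \<Rightarrow> complex" and m
  have B: "0 \<le> B" using order_trans[OF norm_ge_zero assms(3)] .
  have "double_centralizer L L"
    unfolding double_centralizer_def L_def
    using C0_mult_bounded_continuous[OF _ assms(2,3)] by (auto simp: fun_eq_iff ac_simps)
  moreover have "net_tendsto \<mu> (\<lambda>l m. p_lam \<mu> \<alpha> l a m * b m) (L b)"
    and "net_tendsto \<mu> (\<lambda>l m. b m * p_lam \<mu> \<alpha> l a m) (L b)" if "b \<in> C0" for b
    using net_tendsto_mult_C0[OF that B assms(4,5)] unfolding L_def by (simp_all add: mult.commute)
  ultimately show ?thesis
    unfolding alpha_proper_elem_def using assms(1) by blast
qed

lemma P_alpha_zero: "(\<lambda>m. 0) \<in> P_alpha \<mu> \<alpha>"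
  unfolding P_alpha_def by (rule CollectI, rule exI[of _ 0]) simp

lemma P_alpha_add_proper:
  assumes "g \<in> P_alpha \<mu> \<alpha>" "alpha_proper_elem \<mu> \<alpha> h"
  shows "(\<lambda>m. g m + c * h m) \<in> P_alpha \<mu> \<alpha>"
proof -
  obtain n :: nat and cs hs where hs: "\<And>i. i < n \<Longrightarrow> alpha_proper_elem \<mu> \<alpha> (hs i)"
    and g: "g = (\<lambda>m. \<Sum>i<n. cs i * hs i m)"
    using assms(1) unfolding P_alpha_def mem_Collect_eq by blast
  have "(\<lambda>m. g m + c * h m) = (\<lambda>m. \<Sum>i<Suc n. (cs(n := c)) i * (hs(n := h)) i m)"
    unfolding g by (simp add: fun_eq_iff)
  moreover have "\<forall>i<Suc n. alpha_proper_elem \<mu> \<alpha> ((hs(n := h)) i)"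
    using hs assms(2) by (simp add: less_Suc_eq)
  ultimately show ?thesis unfolding P_alpha_def by blast
qed

lemma soft_threshold_dist_le: "0 \<le> d \<Longrightarrow> \<bar>t - (max 0 (t - d) - max 0 (- t - d))\<bar> \<le> (d::real)"
  by (auto simp: max_def)

lemma proper_C0_actionI:
  fixes \<mu> :: "'g::topological_group_add measure" and \<alpha> :: "'g \<Rightarrow> 'm::topological_space \<Rightarrow> 'm"
  assumes "\<And>a S. a \<in> C0_pos \<Longrightarrow> compact S \<Longrightarrow> (\<And>m. m \<notin> S \<Longrightarrow> a m = 0) \<Longrightarrow> alpha_proper_elem \<mu> \<alpha> a"
  shows "proper_C0_action \<mu> \<alpha>"
  unfolding proper_C0_action_def
proof (intro ballI allI impI)
  fix f :: "'m \<Rightarrow> complex" and e :: real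
  assume f: "f \<in> C0" and "e > 0"
  define d where "d = e / 3"
  have "d > 0" using \<open>e > 0\<close> by (simp add: d_def)
  define h where "h c m = complex_of_real (max 0 (Re (c * f m) - d))" for c m
  have proper: "alpha_proper_elem \<mu> \<alpha> (h c)" for c
  proof -
    have "(\<lambda>m. c * f m) \<in> C0"
      using C0_mult_bounded_continuous[OF f, of "\<lambda>_. c" "cmod c"] by simp
    then have "(\<lambda>m. complex_of_real (Re (c * f m))) \<in> C0" by (rule C0_of_real_Re)
    from C0_cutoff[OF this \<open>d > 0\<close>] obtain S where
      "h c \<in> C0_pos" "compact S" "\<And>m. m \<notin> S \<Longrightarrow> h c m = 0"
      unfolding h_def by auto
    then show ?thesis by (rule assms)
  qed
  \<comment> \<open>Re g and Im g are Re f and Im f soft-thresholded at level d; g is written in the shape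
    built by P_alpha_zero and P_alpha_add_proper.\<close>
  define g where "g m = 0 + 1 * h 1 m + -1 * h (-1) m + \<i> * h (-\<i>) m + -\<i> * h \<i> m" for m
  have "g \<in> P_alpha \<mu> \<alpha>"
    unfolding g_def by (intro P_alpha_add_proper P_alpha_zero proper)
  moreover have "cmod (f m - g m) < e" for m
  proof -
    have "cmod (f m - g m) \<le> \<bar>Re (f m - g m)\<bar> + \<bar>Im (f m - g m)\<bar>" by (rule cmod_le)
    also have "\<dots> \<le> d + d"
      using soft_threshold_dist_le[of d "Re (f m)"] soft_threshold_dist_le[of d "Im (f m)"] \<open>d > 0\<close>
      by (simp add: g_def h_def)
    also have "\<dots> < e" using \<open>e > 0\<close> by (simp add: d_def)
    finally show ?thesis .
  qed
  ultimately show "\<exists>g\<in>P_alpha \<mu> \<alpha>. \<forall>m. cmod (f m - g m) < e" by blast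
qed

section \<open>Actions and orbit integrals\<close>

lemma
  assumes "continuous_action \<alpha>"
  shows continuous_action_zero: "\<alpha> 0 m = m"
    and continuous_action_add: "\<alpha> (x + y) m = \<alpha> x (\<alpha> y m)"
    and continuous_on_action: "continuous_on UNIV (\<lambda>p. \<alpha> (fst p) (snd p))"
  using assms unfolding continuous_action_def by (simp_all add: case_prod_beta')

text \<open>With the convention (\<alpha>_x f)(m) = f(\<alpha>_{-x} m) of induced_action, x \<notin> transporter \<alpha> K S
  forces (\<alpha>_x f)(m) = 0 for m \<in> K whenever f vanishes off S.\<close>

definition transporter :: "('g::group_add \<Rightarrow> 'm \<Rightarrow> 'm) \<Rightarrow> 'm set \<Rightarrow> 'm set \<Rightarrow> 'g set" where
  "transporter \<alpha> K S = {x. \<exists>m\<in>K. \<alpha> (- x) m \<in> S}"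

lemma compact_transporter:
  fixes \<alpha> :: "'g::topological_group_add \<Rightarrow> 'm::topological_space \<Rightarrow> 'm"
  assumes "proper_space_action \<alpha>" "compact K" "compact S"
  shows "compact (transporter \<alpha> K S)"
proof -
  have "transporter \<alpha> K S = uminus ` snd ` {(m, x). (m, \<alpha> x m) \<in> K \<times> S}"
    unfolding transporter_def by (force simp: image_iff)
  moreover have "compact {(m, x). (m, \<alpha> x m) \<in> K \<times> S}"
    using assms(1) compact_Times[OF assms(2,3)] unfolding proper_space_action_def by blast
  ultimately show ?thesis
    by (simp add: compact_continuous_image continuous_on_minus continuous_on_snd continuous_on_id)
qed

lemma transporter_singleton_subset_translate:
  assumes "continuous_action \<alpha>" "\<alpha> (- y) m \<in> S"
  shows "transporter \<alpha> {m} S \<subseteq> (+) y ` transporter \<alpha> S S"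
proof
  fix x assume "x \<in> transporter \<alpha> {m} S"
  then have "\<alpha> (- (- y + x)) (\<alpha> (- y) m) \<in> S"
    by (simp add: transporter_def minus_add continuous_action_add[OF assms(1), symmetric] add.assoc)
  then have "- y + x \<in> transporter \<alpha> S S"
    using assms(2) unfolding transporter_def by blast
  then show "x \<in> (+) y ` transporter \<alpha> S S"
    by (rule image_eqI[rotated]) (simp add: add.assoc[symmetric])
qed

lemma proper_space_actionI:
  fixes \<alpha> :: "'g::topological_space \<Rightarrow> 'm::t2_space \<Rightarrow> 'm"
  assumes cont: "continuous_on UNIV (\<lambda>p. \<alpha> (fst p) (snd p))"
    and bounded: "\<And>K1 K2. compact K1 \<Longrightarrow> compact K2 \<Longrightarrow>
       \<exists>D. compact D \<and> (\<forall>m x. m \<in> K1 \<longrightarrow> \<alpha> x m \<in> K2 \<longrightarrow> x \<in> D)"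
  shows "proper_space_action \<alpha>"
  unfolding proper_space_action_def
proof (intro allI impI)
  fix K :: "('m \<times> 'm) set"
  assume "compact K"
  then have K: "compact (fst ` K)" "compact (snd ` K)"
    by (auto intro!: compact_continuous_image continuous_intros)
  then obtain D where D: "compact D" "\<And>m x. m \<in> fst ` K \<Longrightarrow> \<alpha> x m \<in> snd ` K \<Longrightarrow> x \<in> D"
    using bounded by meson
  have "continuous_on UNIV (\<lambda>p::'m \<times> 'g. \<alpha> (snd p) (fst p))"
    using continuous_on_compose2[OF cont, of UNIV "\<lambda>p. (snd p, fst p)"]
    by (simp add: continuous_on_snd continuous_on_fst continuous_on_Pair continuous_on_id)
  then have "closed ((\<lambda>p. (fst p, \<alpha> (snd p) (fst p))) -` K)"
    using \<open>compact K\<close> by (intro closed_vimage compact_imp_closed continuous_intros)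
  moreover have "{(m, x). (m, \<alpha> x m) \<in> K} = (fst ` K \<times> D) \<inter> (\<lambda>p. (fst p, \<alpha> (snd p) (fst p))) -` K"
    using D(2) by force
  ultimately show "compact {(m, x). (m, \<alpha> x m) \<in> K}"
    using K(1) D(1) by (simp add: compact_Int_closed compact_Times)
qed

definition orbit_integral ::
  "'g::group_add measure \<Rightarrow> ('g \<Rightarrow> 'm \<Rightarrow> 'm) \<Rightarrow> ('g \<Rightarrow> real) \<Rightarrow> ('m \<Rightarrow> real) \<Rightarrow> 'm \<Rightarrow> real" where
  "orbit_integral \<mu> \<alpha> l u m = (LINT x|\<mu>. l x * u (\<alpha> (- x) m))"

lemma p_lam_of_real:
  "p_lam \<mu> \<alpha> l (\<lambda>m. of_real (u m)) m = of_real (orbit_integral \<mu> \<alpha> l u m)"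
  unfolding p_lam_def orbit_integral_def induced_action_def by (simp flip: of_real_mult)

lemma p_lam_C0_pos:
  "a \<in> C0_pos \<Longrightarrow> p_lam \<mu> \<alpha> l a m = of_real (orbit_integral \<mu> \<alpha> l (\<lambda>m. Re (a m)) m)"
  by (subst C0_pos_eq_of_real) (simp_all add: p_lam_of_real)

lemma orbit_integral_sum:
  assumes "finite I" "\<And>i. i \<in> I \<Longrightarrow> integrable \<mu> (\<lambda>x. l x * u i (\<alpha> (- x) m))"
  shows "orbit_integral \<mu> \<alpha> l (\<lambda>m. \<Sum>i\<in>I. w i * u i m) m
    = (\<Sum>i\<in>I. w i * orbit_integral \<mu> \<alpha> l (u i) m)"
proof -
  have "orbit_integral \<mu> \<alpha> l (\<lambda>m. \<Sum>i\<in>I. w i * u i m) m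
      = (LINT x|\<mu>. (\<Sum>i\<in>I. w i * (l x * u i (\<alpha> (- x) m))))"
    unfolding orbit_integral_def by (simp add: sum_distrib_left mult.left_commute)
  also have "\<dots> = (\<Sum>i\<in>I. LINT x|\<mu>. w i * (l x * u i (\<alpha> (- x) m)))"
    using assms(2) by (intro Bochner_Integration.integral_sum integrable_mult_right)
  also have "\<dots> = (\<Sum>i\<in>I. w i * orbit_integral \<mu> \<alpha> l (u i) m)"
    by (simp add: orbit_integral_def)
  finally show ?thesis .
qed

text \<open>A Cauchy condition, uniform on compact subsets of M, for the orbit integrals of u over an
  exhaustion of G by compact sets; it does not presuppose integrability over G.\<close>

definition vanishing_orbit_tails ::
  "'g::topological_group_add measure \<Rightarrow> ('g \<Rightarrow> 'm::topological_space \<Rightarrow> 'm) \<Rightarrow> ('m \<Rightarrow> real) \<Rightarrow> bool"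
where
  "vanishing_orbit_tails \<mu> \<alpha> u \<longleftrightarrow>
     (\<forall>K e. compact K \<longrightarrow> e > 0 \<longrightarrow> (\<exists>C. compact C \<and>
        (\<forall>C' m. compact C' \<longrightarrow> C \<inter> C' = {} \<longrightarrow> m \<in> K \<longrightarrow> \<bar>orbit_integral \<mu> \<alpha> (indicator C') u m\<bar> \<le> e)))"

lemma vanishing_orbit_tailsD:
  assumes "vanishing_orbit_tails \<mu> \<alpha> u" "compact K" "e > 0"
  obtains C where "compact C"
    "\<And>C' m. compact C' \<Longrightarrow> C \<inter> C' = {} \<Longrightarrow> m \<in> K \<Longrightarrow> \<bar>orbit_integral \<mu> \<alpha> (indicator C') u m\<bar> \<le> e"
  using assms unfolding vanishing_orbit_tails_def by meson

locale haar_action =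
  fixes \<mu> :: "'g::{topological_group_add,t2_space} measure"
    and \<alpha> :: "'g \<Rightarrow> 'm::t2_space \<Rightarrow> 'm"
  assumes locally_compact: "locally_compact_space (euclidean :: 'm topology)"
    and haar: "left_haar_measure \<mu>"
    and action: "continuous_action \<alpha>"
begin

lemma continuous_on_action_compose [continuous_intros]:
  assumes "continuous_on S f" "continuous_on S g"
  shows "continuous_on S (\<lambda>z. \<alpha> (f z) (g z))"
  using continuous_on_compose2[OF continuous_on_action[OF action], of S "\<lambda>z. (f z, g z)"] assms
  by (auto intro: continuous_on_Pair)

lemma compact_neighbourhood:
  fixes m :: 'm
  obtains U L where "open U" "compact L" "m \<in> U" "U \<subseteq> L"
proof -
  have "\<forall>m::'m. \<exists>U. open U \<and> (\<exists>L. compact L \<and> m \<in> U \<and> U \<subseteq> L)"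
    using locally_compact unfolding locally_compact_space_def by simp
  then show thesis using that by blast
qed

lemma continuous_on_orbit:
  assumes "continuous_on UNIV u"
  shows "continuous_on UNIV (\<lambda>p. u (\<alpha> (- fst p) (snd p)))"
proof -
  have "continuous_on UNIV (\<lambda>p::'g \<times> 'm. \<alpha> (- fst p) (snd p))"
    by (intro continuous_intros)
  then show ?thesis using continuous_on_compose2[OF assms] by blast
qed

lemma borel_measurable_orbit:
  assumes "continuous_on UNIV u"
  shows "(\<lambda>x. u (\<alpha> (- x) m)) \<in> borel_measurable borel"
proof -
  have "continuous_on UNIV (\<lambda>x. \<alpha> (- x) m)"
    by (intro continuous_intros)
  then show ?thesis
    using continuous_on_compose2[OF assms] by (blast intro: borel_measurable_continuous_onI)
qed

lemma integrable_orbit_integrand: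
  fixes l :: "'g \<Rightarrow> real" and u :: "'m \<Rightarrow> real"
  assumes "l \<in> borel_measurable borel" "\<And>x. \<bar>l x\<bar> \<le> 1"
    and "continuous_on UNIV u" "\<And>m. \<bar>u m\<bar> \<le> B"
    and "compact C" "\<And>x. x \<notin> C \<Longrightarrow> l x * u (\<alpha> (- x) m) = 0"
  shows "integrable \<mu> (\<lambda>x. l x * u (\<alpha> (- x) m))"
proof (rule integrable_bounded_compact_support[OF haar _ assms(5)])
  show "(\<lambda>x. l x * u (\<alpha> (- x) m)) \<in> borel_measurable borel"
    using assms(1) borel_measurable_orbit[OF assms(3)] by measurable
  show "norm (l x * u (\<alpha> (- x) m)) \<le> B" for x
    using mult_mono[OF assms(2)[of x] assms(4)] by (simp add: abs_mult)
qed (use assms(6) in blast)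

lemma integrable_indicator_orbit:
  fixes u :: "'m \<Rightarrow> real"
  assumes "continuous_on UNIV u" "\<And>m. \<bar>u m\<bar> \<le> B" "compact C"
  shows "integrable \<mu> (\<lambda>x. indicator C x * u (\<alpha> (- x) m))"
  using assms BsetD(1,4)[OF indicator_in_Bset[OF assms(3)]]
  by (intro integrable_orbit_integrand) auto

lemma orbit_integral_indicator_disjoint_Un:
  fixes u :: "'m \<Rightarrow> real"
  assumes "continuous_on UNIV u" "\<And>m. \<bar>u m\<bar> \<le> B" "compact C" "compact C'" "C \<inter> C' = {}"
  shows "orbit_integral \<mu> \<alpha> (indicator (C \<union> C')) u m
    = orbit_integral \<mu> \<alpha> (indicator C) u m + orbit_integral \<mu> \<alpha> (indicator C') u m"
  unfolding orbit_integral_def indicator_disj_union[OF assms(5)] distrib_right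
  using assms by (intro Bochner_Integration.integral_add integrable_indicator_orbit)

context
  fixes u :: "'m \<Rightarrow> real" and S :: "'m set"
  assumes proper: "proper_space_action \<alpha>"
    and compact_support: "compact S"
    and u_continuous: "continuous_on UNIV u"
    and u_nonneg: "\<And>m. 0 \<le> u m"
    and u_support: "\<And>m. m \<notin> S \<Longrightarrow> u m = 0"
begin

lemma u_bounded:
  obtains B where "\<And>m. \<bar>u m\<bar> \<le> B"
proof -
  obtain B where "\<And>m. cmod (of_real (u m)) \<le> B"
    using C0_bounded[OF of_real_compact_support_in_C0[OF u_continuous compact_support u_support]]
    by blast
  then have "\<bar>u m\<bar> \<le> B" for m by simp
  then show thesis by (rule that)
qed

lemma orbit_integrand_vanishes: "m \<in> K \<Longrightarrow> x \<notin> transporter \<alpha> K S \<Longrightarrow> u (\<alpha> (- x) m) = 0"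
  unfolding transporter_def using u_support by blast

lemma integrable_orbit:
  fixes l :: "'g \<Rightarrow> real"
  assumes "l \<in> borel_measurable borel" "\<And>x. \<bar>l x\<bar> \<le> 1"
  shows "integrable \<mu> (\<lambda>x. l x * u (\<alpha> (- x) m))"
proof -
  obtain B where "\<And>m. \<bar>u m\<bar> \<le> B" using u_bounded by blast
  then show ?thesis
    using assms orbit_integrand_vanishes[of m "{m}"]
    by (intro integrable_orbit_integrand[where C = "transporter \<alpha> {m} S"] u_continuous
        compact_transporter proper compact_support) auto
qed

lemma integrable_orbit_total: "integrable \<mu> (\<lambda>x. u (\<alpha> (- x) m))"
  using integrable_orbit[of "\<lambda>_. 1"] by simp

lemma total_orbit_integral_nonneg: "0 \<le> orbit_integral \<mu> \<alpha> (\<lambda>_. 1) u m"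
  unfolding orbit_integral_def using u_nonneg by simp

lemma orbit_integral_Bset:
  assumes "l \<in> Bset"
  shows "0 \<le> orbit_integral \<mu> \<alpha> l u m"
    and "orbit_integral \<mu> \<alpha> l u m \<le> orbit_integral \<mu> \<alpha> (\<lambda>_. 1) u m"
  unfolding orbit_integral_def
  using BsetD[OF assms] u_nonneg
  by (auto intro!: integral_nonneg_AE integral_mono integrable_orbit integrable_orbit_total
      mult_left_le_one_le)

lemma orbit_integral_eq_total:
  assumes "m \<in> K" "l \<in> Bset" "Ble \<mu> (indicator (transporter \<alpha> K S)) l"
  shows "orbit_integral \<mu> \<alpha> l u m = orbit_integral \<mu> \<alpha> (\<lambda>_. 1) u m"
  unfolding orbit_integral_def
proof (rule integral_cong_AE)
  show "(\<lambda>x. l x * u (\<alpha> (- x) m)) \<in> borel_measurable \<mu>"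
    by (rule borel_measurable_integrable, rule integrable_orbit) (use BsetD[OF assms(2)] in auto)
  show "(\<lambda>x. 1 * u (\<alpha> (- x) m)) \<in> borel_measurable \<mu>"
    using borel_measurable_integrable[OF integrable_orbit_total] by simp
  have "l x * u (\<alpha> (- x) m) = 1 * u (\<alpha> (- x) m)" if "indicator (transporter \<alpha> K S) x \<le> l x" for x
    using that BsetD(3)[OF assms(2), of x] orbit_integrand_vanishes[OF assms(1), of x]
    by (cases "x \<in> transporter \<alpha> K S") auto
  then show "AE x in \<mu>. l x * u (\<alpha> (- x) m) = 1 * u (\<alpha> (- x) m)"
    using assms(3) unfolding Ble_def by (auto elim: AE_mp)
qed

lemma total_orbit_integral_bounded:
  obtains B where "\<And>m. orbit_integral \<mu> \<alpha> (\<lambda>_. 1) u m \<le> B"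
proof -
  obtain Bu where Bu: "\<And>m. \<bar>u m\<bar> \<le> Bu" using u_bounded by blast
  define Z where "Z = transporter \<alpha> S S"
  have Z: "compact Z" unfolding Z_def by (intro compact_transporter proper compact_support)
  have "orbit_integral \<mu> \<alpha> (\<lambda>_. 1) u m \<le> Bu * measure \<mu> Z" for m
  proof -
    obtain y where y: "transporter \<alpha> {m} S \<subseteq> (+) y ` Z"
    proof (cases "transporter \<alpha> {m} S = {}")
      case False
      then obtain y where "\<alpha> (- y) m \<in> S" unfolding transporter_def by blast
      then show thesis
        using that transporter_singleton_subset_translate[OF action] unfolding Z_def by blast
    qed (use that in blast)
    have Zy: "compact ((+) y ` Z)" by (rule compact_translate[OF Z])
    have "orbit_integral \<mu> \<alpha> (\<lambda>_. 1) u m \<le> LINT x|\<mu>. Bu * indicator ((+) y ` Z) x"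
      unfolding orbit_integral_def
    proof (intro integral_mono)
      show "integrable \<mu> (\<lambda>x. Bu * indicator ((+) y ` Z) x)"
        using Zy haar by (intro integrable_mult_right integrable_real_indicator
            left_haar_measure_compact_sets left_haar_measure_compact_finite)
      show "1 * u (\<alpha> (- x) m) \<le> Bu * indicator ((+) y ` Z) x" for x
        using Bu[of "\<alpha> (- x) m"] y orbit_integrand_vanishes[of m "{m}" x]
        by (cases "x \<in> transporter \<alpha> {m} S") (auto simp: indicator_def)
    qed (simp add: integrable_orbit_total)
    also have "\<dots> = Bu * measure \<mu> Z"
      using Zy haar
      by (simp add: left_haar_measure_space left_haar_measure_measure_translate[OF haar Z])
    finally show ?thesis .
  qed
  then show thesis by (rule that)
qed

lemma continuous_total_orbit_integral: "continuous_on UNIV (orbit_integral \<mu> \<alpha> (\<lambda>_. 1) u)"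
proof (intro continuous_at_imp_continuous_on ballI)
  fix m0 :: 'm
  obtain U L where UL: "open U" "compact L" "m0 \<in> U" "U \<subseteq> L" by (rule compact_neighbourhood)
  define C where "C = transporter \<alpha> L S"
  have C: "compact C" unfolding C_def by (intro compact_transporter proper UL(2) compact_support)
  have local_eq: "orbit_integral \<mu> \<alpha> (\<lambda>_. 1) u m = (LINT x|\<mu>. indicator C x * u (\<alpha> (- x) m))"
    if "m \<in> L" for m
    unfolding orbit_integral_def C_def
    by (intro Bochner_Integration.integral_cong refl)
       (auto simp: indicator_def orbit_integrand_vanishes[OF that])
  have "continuous_on UNIV (\<lambda>m. LINT x|\<mu>. indicator C x * u (\<alpha> (- x) m))"
    using C haar BsetD(1,4)[OF indicator_in_Bset[OF C]]
    by (intro continuous_on_integral_indicator_compact continuous_on_orbit u_continuous integrable_orbit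
        left_haar_measure_compact_sets left_haar_measure_compact_finite) auto
  moreover have "\<forall>\<^sub>F m in nhds m0.
      orbit_integral \<mu> \<alpha> (\<lambda>_. 1) u m = (LINT x|\<mu>. indicator C x * u (\<alpha> (- x) m))"
    using UL local_eq unfolding eventually_nhds by blast
  ultimately show "isCont (orbit_integral \<mu> \<alpha> (\<lambda>_. 1) u) m0"
    by (simp add: isCont_cong continuous_on_eq_continuous_at)
qed

lemma alpha_proper_elem_of_real: "alpha_proper_elem \<mu> \<alpha> (\<lambda>m. of_real (u m))"
proof -
  define \<phi> where "\<phi> = orbit_integral \<mu> \<alpha> (\<lambda>_. 1) u"
  obtain B where B: "\<And>m. \<phi> m \<le> B" using total_orbit_integral_bounded unfolding \<phi>_def by blast
  have \<phi>_nonneg: "0 \<le> \<phi> m" for m unfolding \<phi>_def by (rule total_orbit_integral_nonneg)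
  show ?thesis
  proof (rule alpha_proper_elemI[where \<phi> = "\<lambda>m. of_real (\<phi> m)" and B = B])
    show "(\<lambda>m. complex_of_real (u m)) \<in> C0_pos"
      using of_real_compact_support_in_C0[OF u_continuous compact_support u_support] u_nonneg
      unfolding C0_pos_def by auto
    show "continuous_on UNIV (\<lambda>m. complex_of_real (\<phi> m))"
      unfolding \<phi>_def by (intro continuous_intros continuous_total_orbit_integral)
    show "cmod (complex_of_real (\<phi> m)) \<le> B" for m using B[of m] \<phi>_nonneg[of m] by simp
    show "cmod (p_lam \<mu> \<alpha> l (\<lambda>m. of_real (u m)) m - of_real (\<phi> m)) \<le> B" if "l \<in> Bset" for l m
      using orbit_integral_Bset[OF that, of m] B[of m]
      by (simp add: p_lam_of_real \<phi>_def flip: of_real_diff)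
    show "\<exists>l0\<in>Bset. \<forall>l\<in>Bset. Ble \<mu> l0 l \<longrightarrow> (\<forall>m\<in>K. p_lam \<mu> \<alpha> l (\<lambda>m. of_real (u m)) m = of_real (\<phi> m))"
      if "compact K" for K
      using indicator_in_Bset[OF compact_transporter[OF proper that compact_support]]
        orbit_integral_eq_total[of _ K]
      by (auto simp: p_lam_of_real \<phi>_def)
  qed
qed

end

lemma alpha_proper_elem_compact_support:
  assumes "proper_space_action \<alpha>" "a \<in> C0_pos" "compact S" "\<And>m. m \<notin> S \<Longrightarrow> a m = 0"
  shows "alpha_proper_elem \<mu> \<alpha> a"
proof -
  have "continuous_on UNIV (\<lambda>m. Re (a m))"
    using assms(2) unfolding C0_pos_def C0_def by (auto intro: continuous_intros)
  then have "alpha_proper_elem \<mu> \<alpha> (\<lambda>m. of_real (Re (a m)))"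
    using assms unfolding C0_pos_def by (intro alpha_proper_elem_of_real[of S]) auto
  then show ?thesis using C0_pos_eq_of_real[OF assms(2)] by simp
qed

theorem proper_C0_action_if_proper_space_action:
  "proper_space_action \<alpha> \<Longrightarrow> proper_C0_action \<mu> \<alpha>"
  by (intro proper_C0_actionI alpha_proper_elem_compact_support)

lemma alpha_proper_elem_indicator_net:
  assumes "alpha_proper_elem \<mu> \<alpha> h" "compact K" "e > 0"
  obtains C L where "compact C"
    "\<And>C' m. compact C' \<Longrightarrow> C \<subseteq> C' \<Longrightarrow> m \<in> K \<Longrightarrow> cmod (p_lam \<mu> \<alpha> (indicator C') h m - L m) \<le> e"
proof -
  \<comment> \<open>Testing the strict convergence against some b \<in> C0 with b = 1 on K.\<close>
  obtain b where b: "b \<in> C0" "\<And>m. m \<in> K \<Longrightarrow> b m = 1"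
    using C0_urysohn[OF locally_compact \<open>compact K\<close>] by blast
  obtain L where "net_tendsto \<mu> (\<lambda>l m. p_lam \<mu> \<alpha> l h m * b m) L"
    using assms(1) b(1) unfolding alpha_proper_elem_def by blast
  then obtain l0 where l0: "l0 \<in> Bset"
    "\<And>l m. l \<in> Bset \<Longrightarrow> Ble \<mu> l0 l \<Longrightarrow> cmod (p_lam \<mu> \<alpha> l h m * b m - L m) \<le> e"
    using \<open>e > 0\<close> unfolding net_tendsto_def by meson
  obtain C where C: "compact C" "\<And>x. x \<notin> C \<Longrightarrow> l0 x = 0"
    using l0(1) unfolding Bset_def by blast
  have "cmod (p_lam \<mu> \<alpha> (indicator C') h m - L m) \<le> e" if "compact C'" "C \<subseteq> C'" "m \<in> K" for C' m
  proof -
    have "l0 x \<le> indicator C' x" for x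
    proof (cases "x \<in> C'")
      case False
      then have "x \<notin> C" using that(2) by blast
      then show ?thesis using C(2) False by simp
    qed (simp add: BsetD(3)[OF l0(1)])
    then have "Ble \<mu> l0 (indicator C')" by (simp add: Ble_def)
    then show ?thesis using l0(2)[OF indicator_in_Bset[OF that(1)], of m] b(2)[OF that(3)] by simp
  qed
  with C(1) show thesis by (rule that)
qed

lemma alpha_proper_elem_vanishing_orbit_tails:
  assumes "alpha_proper_elem \<mu> \<alpha> h"
  shows "vanishing_orbit_tails \<mu> \<alpha> (\<lambda>m. Re (h m))"
  unfolding vanishing_orbit_tails_def
proof (intro allI impI)
  fix K :: "'m set" and e :: real
  assume "compact K" "e > 0"
  have h: "h \<in> C0_pos" using assms unfolding alpha_proper_elem_def by blast
  then have "h \<in> C0" unfolding C0_pos_def by blast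
  then obtain B where B: "\<And>m. \<bar>Re (h m)\<bar> \<le> B"
    using C0_bounded abs_Re_le_cmod order_trans by metis
  have h_cont: "continuous_on UNIV (\<lambda>m. Re (h m))"
    using \<open>h \<in> C0\<close> unfolding C0_def by (auto intro: continuous_intros)
  obtain C L where C: "compact C"
    "\<And>C' m. compact C' \<Longrightarrow> C \<subseteq> C' \<Longrightarrow> m \<in> K \<Longrightarrow> cmod (p_lam \<mu> \<alpha> (indicator C') h m - L m) \<le> e / 2"
    using alpha_proper_elem_indicator_net[OF assms \<open>compact K\<close> half_gt_zero[OF \<open>e > 0\<close>]] by blast
  have "\<bar>orbit_integral \<mu> \<alpha> (indicator C') (\<lambda>m. Re (h m)) m\<bar> \<le> e"
    if "compact C'" "C \<inter> C' = {}" "m \<in> K" for C' m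
  proof -
    let ?I = "\<lambda>D. p_lam \<mu> \<alpha> (indicator D) h m"
    have "\<bar>orbit_integral \<mu> \<alpha> (indicator C') (\<lambda>m. Re (h m)) m\<bar> = cmod (?I (C \<union> C') - ?I C)"
      using orbit_integral_indicator_disjoint_Un[OF h_cont B C(1) that(1,2)]
      by (simp add: p_lam_C0_pos[OF h] flip: of_real_diff)
    also have "\<dots> \<le> cmod (?I (C \<union> C') - L m) + cmod (?I C - L m)"
      by (rule norm_diff_triangle_le[OF order_refl]) (simp add: norm_minus_commute)
    also have "\<dots> \<le> e / 2 + e / 2"
      using C that by (intro add_mono C(2)) auto
    finally show ?thesis by simp
  qed
  with C(1) show "\<exists>C. compact C \<and> (\<forall>C' m. compact C' \<longrightarrow> C \<inter> C' = {} \<longrightarrow> m \<in> K \<longrightarrow>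
      \<bar>orbit_integral \<mu> \<alpha> (indicator C') (\<lambda>m. Re (h m)) m\<bar> \<le> e)"
    by blast
qed

lemma vanishing_orbit_tails_sum:
  fixes u :: "'i \<Rightarrow> 'm \<Rightarrow> real"
  assumes "finite I"
    and "\<And>i. i \<in> I \<Longrightarrow> vanishing_orbit_tails \<mu> \<alpha> (u i)"
    and "\<And>i. i \<in> I \<Longrightarrow> continuous_on UNIV (u i)"
    and "\<And>i m. i \<in> I \<Longrightarrow> \<bar>u i m\<bar> \<le> B i"
  shows "vanishing_orbit_tails \<mu> \<alpha> (\<lambda>m. \<Sum>i\<in>I. w i * u i m)"
  unfolding vanishing_orbit_tails_def
proof (intro allI impI)
  fix K :: "'m set" and e :: real
  assume "compact K" "e > 0"
  define W where "W = (\<Sum>i\<in>I. \<bar>w i\<bar>)"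
  have "0 \<le> W" unfolding W_def by (simp add: sum_nonneg)
  define e' where "e' = e / (W + 1)"
  have "e' > 0" using \<open>e > 0\<close> \<open>0 \<le> W\<close> by (simp add: e'_def)
  have "\<forall>i\<in>I. \<exists>C. compact C \<and> (\<forall>C' m. compact C' \<longrightarrow> C \<inter> C' = {} \<longrightarrow> m \<in> K \<longrightarrow>
      \<bar>orbit_integral \<mu> \<alpha> (indicator C') (u i) m\<bar> \<le> e')"
    using assms(2) \<open>compact K\<close> \<open>e' > 0\<close> unfolding vanishing_orbit_tails_def by blast
  then obtain C where C: "\<And>i. i \<in> I \<Longrightarrow> compact (C i)"
    "\<And>i C' m. i \<in> I \<Longrightarrow> compact C' \<Longrightarrow> C i \<inter> C' = {} \<Longrightarrow> m \<in> K \<Longrightarrow>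
       \<bar>orbit_integral \<mu> \<alpha> (indicator C') (u i) m\<bar> \<le> e'"
    by metis
  have "\<bar>orbit_integral \<mu> \<alpha> (indicator C') (\<lambda>m. \<Sum>i\<in>I. w i * u i m) m\<bar> \<le> e"
    if "compact C'" "(\<Union>i\<in>I. C i) \<inter> C' = {}" "m \<in> K" for C' m
  proof -
    have "orbit_integral \<mu> \<alpha> (indicator C') (\<lambda>m. \<Sum>i\<in>I. w i * u i m) m
        = (\<Sum>i\<in>I. w i * orbit_integral \<mu> \<alpha> (indicator C') (u i) m)"
      using assms(1,3,4) that(1) by (intro orbit_integral_sum integrable_indicator_orbit)
    also have "\<bar>\<dots>\<bar> \<le> (\<Sum>i\<in>I. \<bar>w i\<bar> * e')"
    proof (rule order_trans[OF sum_abs sum_mono])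
      fix i assume "i \<in> I"
      then have "C i \<inter> C' = {}" using that(2) by blast
      then show "\<bar>w i * orbit_integral \<mu> \<alpha> (indicator C') (u i) m\<bar> \<le> \<bar>w i\<bar> * e'"
        using C(2)[OF \<open>i \<in> I\<close> that(1) _ that(3)] by (simp add: abs_mult mult_left_mono)
    qed
    also have "\<dots> = W * e'" by (simp add: W_def sum_distrib_right)
    also have "\<dots> \<le> e" using \<open>0 \<le> W\<close> \<open>e > 0\<close> by (simp add: e'_def field_simps)
    finally show ?thesis .
  qed
  moreover have "compact (\<Union>i\<in>I. C i)" using assms(1) C(1) by (intro compact_UN) auto
  ultimately show "\<exists>C. compact C \<and> (\<forall>C' m. compact C' \<longrightarrow> C \<inter> C' = {} \<longrightarrow> m \<in> K \<longrightarrow>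
      \<bar>orbit_integral \<mu> \<alpha> (indicator C') (\<lambda>m. \<Sum>i\<in>I. w i * u i m) m\<bar> \<le> e)"
    by blast
qed

lemma action_lower_bound_near_zero:
  fixes H :: "'m \<Rightarrow> real"
  assumes "continuous_on UNIV H" "compact K" "c > 0" "\<And>k. k \<in> K \<Longrightarrow> c \<le> H k"
  obtains V where "open V" "0 \<in> V" "\<And>v k. v \<in> V \<Longrightarrow> k \<in> K \<Longrightarrow> c / 2 \<le> H (\<alpha> v k)"
proof -
  have "continuous_on UNIV (\<lambda>p. H (\<alpha> (fst p) (snd p)))"
    using continuous_on_compose2[OF assms(1) continuous_on_action[OF action]] by simp
  then have "continuous_on (UNIV \<times> K) (\<lambda>p. H (\<alpha> (fst p) (snd p)))"
    by (rule continuous_on_subset) simp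
  then obtain V where V: "0 \<in> V" "open V"
    "\<And>v k. v \<in> V \<Longrightarrow> k \<in> K \<Longrightarrow> dist (H (\<alpha> v k)) (H (\<alpha> 0 k)) \<le> c / 2"
    by (rule continuous_on_prod_compactE[OF _ \<open>compact K\<close> UNIV_I half_gt_zero[OF \<open>c > 0\<close>]]) auto
  have "c / 2 \<le> H (\<alpha> v k)" if "v \<in> V" "k \<in> K" for v k
  proof -
    have "\<bar>H (\<alpha> v k) - H k\<bar> \<le> c / 2"
      using V(3)[OF that] by (simp add: continuous_action_zero[OF action] dist_real_def)
    then show ?thesis using assms(4)[OF that(2)] unfolding abs_le_iff by linarith
  qed
  with V(2,1) show thesis by (rule that)
qed

lemma orbit_integral_translate_lower_bound:
  fixes H :: "'m \<Rightarrow> real"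
  assumes H: "continuous_on UNIV H" "\<And>m. 0 \<le> H m" "\<And>m. H m \<le> B"
    and "compact Q" "\<And>q k. q \<in> Q \<Longrightarrow> k \<in> K \<Longrightarrow> c \<le> H (\<alpha> (- q) k)" "\<alpha> x m \<in> K"
  shows "c * measure \<mu> Q \<le> orbit_integral \<mu> \<alpha> (indicator ((+) (- x) ` Q)) H m"
proof -
  define T where "T = (+) (- x) ` Q"
  have T: "compact T" unfolding T_def by (rule compact_translate[OF \<open>compact Q\<close>])
  have "c * measure \<mu> Q = LINT y|\<mu>. indicator T y * c"
    using T haar \<open>compact Q\<close>
    by (simp add: T_def left_haar_measure_space left_haar_measure_measure_translate)
  also have "\<dots> \<le> orbit_integral \<mu> \<alpha> (indicator T) H m"
    unfolding orbit_integral_def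
  proof (rule integral_mono)
    show "integrable \<mu> (\<lambda>y. indicator T y * c)"
      using T haar by (intro integrable_mult_left integrable_real_indicator
          left_haar_measure_compact_sets left_haar_measure_compact_finite)
    show "integrable \<mu> (\<lambda>y. indicator T y * H (\<alpha> (- y) m))"
      using H
      by (intro integrable_indicator_orbit[OF H(1) _ T, of B]) (simp add: abs_le_iff order_trans[OF _ H(2)])
    show "indicator T y * c \<le> indicator T y * H (\<alpha> (- y) m)" for y
    proof (cases "y \<in> T")
      case True
      then obtain q where "q \<in> Q" "y = - x + q" unfolding T_def by blast
      then have "\<alpha> (- y) m = \<alpha> (- q) (\<alpha> x m)"
        by (simp add: minus_add continuous_action_add[OF action])
      then show ?thesis using True assms(5)[OF \<open>q \<in> Q\<close> assms(6)] by simp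
    qed simp
  qed
  finally show ?thesis unfolding T_def .
qed

lemma transporter_bounded_if_vanishing_orbit_tails:
  fixes H :: "'m \<Rightarrow> real"
  assumes tails: "vanishing_orbit_tails \<mu> \<alpha> H"
    and H: "continuous_on UNIV H" "\<And>m. 0 \<le> H m" "\<And>m. H m \<le> B"
    and K: "compact K1" "compact K2"
    and c: "c > 0" "\<And>k. k \<in> K2 \<Longrightarrow> c \<le> H k"
  obtains D where "compact D" "\<And>m x. m \<in> K1 \<Longrightarrow> \<alpha> x m \<in> K2 \<Longrightarrow> x \<in> D"
proof -
  obtain V where V: "open V" "0 \<in> V" "\<And>v k. v \<in> V \<Longrightarrow> k \<in> K2 \<Longrightarrow> c / 2 \<le> H (\<alpha> v k)"
    using action_lower_bound_near_zero[OF H(1) K(2) c] by blast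
  have "open (uminus -` V)" using V(1) by (intro open_vimage continuous_intros)
  moreover have "0 \<in> uminus -` V" using V(2) by simp
  ultimately obtain Q where Q: "compact Q" "Q \<subseteq> uminus -` V" "0 < measure \<mu> Q"
    using left_haar_measure_compact_subset_pos[OF haar] by blast
  define \<delta> where "\<delta> = measure \<mu> Q"
  have "c * \<delta> / 4 > 0" using c(1) Q(3) by (simp add: \<delta>_def)
  then obtain C where C: "compact C"
    "\<And>C' m. compact C' \<Longrightarrow> C \<inter> C' = {} \<Longrightarrow> m \<in> K1 \<Longrightarrow> \<bar>orbit_integral \<mu> \<alpha> (indicator C') H m\<bar> \<le> c * \<delta> / 4"
    using vanishing_orbit_tailsD[OF tails K(1)] by blast
  define D where "D = (\<lambda>p. fst p + - snd p) ` (Q \<times> C)"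
  have "compact D"
    unfolding D_def using Q(1) C(1) by (intro compact_continuous_image compact_Times continuous_intros)
  \<comment> \<open>Otherwise the translate T of Q is disjoint from C, but H (\<alpha> (- y) m) \<ge> c / 2 on T
    puts c \<delta> / 2 into a tail that is at most c \<delta> / 4.\<close>
  moreover have "x \<in> D" if m: "m \<in> K1" "\<alpha> x m \<in> K2" for m x
  proof (rule ccontr)
    assume "x \<notin> D"
    define T where "T = (+) (- x) ` Q"
    have T: "compact T" unfolding T_def by (rule compact_translate[OF Q(1)])
    have "C \<inter> T = {}"
    proof (rule ccontr)
      assume "C \<inter> T \<noteq> {}"
      then obtain q where q: "q \<in> Q" "- x + q \<in> C" unfolding T_def by blast
      have "x = (\<lambda>p. fst p + - snd p) (q, - x + q)" by (simp add: minus_add add.assoc)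
      moreover have "(q, - x + q) \<in> Q \<times> C" using q by simp
      ultimately have "x \<in> D" unfolding D_def by (rule image_eqI)
      with \<open>x \<notin> D\<close> show False by contradiction
    qed
    have "c / 2 * \<delta> \<le> orbit_integral \<mu> \<alpha> (indicator T) H m"
      unfolding \<delta>_def T_def using Q(2) V(3)
      by (intro orbit_integral_translate_lower_bound[OF H Q(1) _ m(2)]) auto
    also have "\<dots> \<le> c * \<delta> / 4"
      using C(2)[OF T \<open>C \<inter> T = {}\<close> m(1)] by simp
    finally show False using \<open>c * \<delta> / 4 > 0\<close> by (simp add: mult.commute)
  qed
  ultimately show thesis by (rule that)
qed

lemma P_alpha_dominated:
  assumes "g \<in> P_alpha \<mu> \<alpha>"
  obtains H B where "vanishing_orbit_tails \<mu> \<alpha> H" "continuous_on UNIV H"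
    "\<And>m. 0 \<le> H m" "\<And>m. H m \<le> B" "\<And>m. cmod (g m) \<le> H m"
proof -
  obtain n :: nat and c h where h: "\<And>i. i < n \<Longrightarrow> alpha_proper_elem \<mu> \<alpha> (h i)"
    and g: "g = (\<lambda>m. \<Sum>i<n. c i * h i m)"
    using assms unfolding P_alpha_def mem_Collect_eq by blast
  have pos: "h i \<in> C0_pos" if "i < n" for i
    using h[OF that] unfolding alpha_proper_elem_def by blast
  then have cont: "continuous_on UNIV (\<lambda>m. Re (h i m))" if "i < n" for i
    using that unfolding C0_pos_def C0_def by (auto intro: continuous_intros)
  have "\<forall>i. \<exists>B. i < n \<longrightarrow> (\<forall>m. \<bar>Re (h i m)\<bar> \<le> B)"
    using C0_bounded pos abs_Re_le_cmod order_trans unfolding C0_pos_def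
    by (metis (mono_tags, lifting) mem_Collect_eq)
  then obtain Bh where Bh: "\<And>i m. i < n \<Longrightarrow> \<bar>Re (h i m)\<bar> \<le> Bh i" by metis
  define H where "H m = (\<Sum>i<n. cmod (c i) * Re (h i m))" for m
  show thesis
  proof (rule that)
    show "vanishing_orbit_tails \<mu> \<alpha> H"
      unfolding H_def using h cont Bh
      by (intro vanishing_orbit_tails_sum alpha_proper_elem_vanishing_orbit_tails) auto
    show "continuous_on UNIV H"
      unfolding H_def using cont by (intro continuous_on_sum continuous_on_mult_left) auto
    show "0 \<le> H m" for m
      unfolding H_def using pos by (auto intro!: sum_nonneg simp flip: C0_pos_norm_eq_Re)
    show "H m \<le> (\<Sum>i<n. cmod (c i) * Bh i)" for m
      unfolding H_def using Bh by (auto intro!: sum_mono mult_left_mono dest: abs_le_D1)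
    show "cmod (g m) \<le> H m" for m
      unfolding g H_def using norm_sum[of "\<lambda>i. c i * h i m" "{..<n}"]
      by (simp add: norm_mult C0_pos_norm_eq_Re pos)
  qed
qed

theorem proper_space_action_if_proper_C0_action:
  assumes "proper_C0_action \<mu> \<alpha>"
  shows "proper_space_action \<alpha>"
proof (rule proper_space_actionI[OF continuous_on_action[OF action]])
  fix K1 K2 :: "'m set"
  assume "compact K1" "compact K2"
  obtain b where b: "b \<in> C0" "\<And>m. m \<in> K2 \<Longrightarrow> b m = 1"
    using C0_urysohn[OF locally_compact \<open>compact K2\<close>] by blast
  then obtain g where g: "g \<in> P_alpha \<mu> \<alpha>" "\<And>m. cmod (b m - g m) < 1 / 2"
    using assms unfolding proper_C0_action_def by (meson half_gt_zero zero_less_one)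
  obtain H B where H: "vanishing_orbit_tails \<mu> \<alpha> H" "continuous_on UNIV H"
    "\<And>m. 0 \<le> H m" "\<And>m. H m \<le> B" "\<And>m. cmod (g m) \<le> H m"
    using P_alpha_dominated[OF g(1)] by blast
  have "1 / 2 \<le> H k" if "k \<in> K2" for k
    using g(2)[of k] H(5)[of k] norm_triangle_ineq2[of "b k" "g k"] by (simp add: b(2)[OF that])
  then obtain D where "compact D" "\<And>m x. m \<in> K1 \<Longrightarrow> \<alpha> x m \<in> K2 \<Longrightarrow> x \<in> D"
    using transporter_bounded_if_vanishing_orbit_tails[OF H(1-4) \<open>compact K1\<close> \<open>compact K2\<close>,
        of "1 / 2"]
    by auto
  then show "\<exists>D. compact D \<and> (\<forall>m x. m \<in> K1 \<longrightarrow> \<alpha> x m \<in> K2 \<longrightarrow> x \<in> D)" by blast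
qed

end

theorem theorem4p7:
  fixes \<mu> :: "'g::{topological_group_add,t2_space} measure"
    and \<alpha> :: "'g \<Rightarrow> 'm::t2_space \<Rightarrow> 'm"
  assumes "locally_compact_space (euclidean :: 'g topology)"
    and "locally_compact_space (euclidean :: 'm topology)"
    and "left_haar_measure \<mu>"
    and "continuous_action \<alpha>"
  shows "proper_C0_action \<mu> \<alpha> \<longleftrightarrow> proper_space_action \<alpha>"
proof -
  interpret haar_action \<mu> \<alpha> using assms(2-4) by unfold_locales
  show ?thesis
    using proper_space_action_if_proper_C0_action proper_C0_action_if_proper_space_action by blast
qed

end
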